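(* Let $m,n$ be positive integers and let $X$ have Snedecor's $F$-distribution with $m$ and $n$ degrees of freedom, i.e. density $f(x)=\frac{\Gamma(\frac{n+m}2)(\frac mn)^{m/2}x^{(m-2)/2}}{\Gamma(\frac m2)\Gamma(\frac n2)(1+\frac mnx)^{(n+m)/2}}$ for $0<x<\infty$. Then $$\Pr\{X\ge x\}\le x^{m/2}\Big(\frac{n+m}{n+mx}\Big)^{(m+n)/2}\quad\text{for } x\ge1,\qquad \Pr\{X\le x\}\le x^{m/2}\Big(\frac{n+m}{n+mx}\Big)^{(m+n)/2}\quad\text{for } 0<x\le1,$$ and the function $x\mapsto x^{m/2}\big(\frac{n+m}{n+mx}\big)^{(m+n)/2}$ is monotonically increasing on $(0,1)$ and monotonically decreasing on $(1,\infty)$. *)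

theory Defs
  imports "HOL-Probability.Probability"
begin

definition F_density :: "nat \<Rightarrow> nat \<Rightarrow> real \<Rightarrow> real" where
  "F_density m n x =
     (if 0 < x then
        Gamma ((real n + real m) / 2) * (real m / real n) powr (real m / 2)
          * x powr ((real m - 2) / 2)
        / (Gamma (real m / 2) * Gamma (real n / 2)
           * (1 + real m / real n * x) powr ((real n + real m) / 2))
      else 0)"

definition F_bound :: "nat \<Rightarrow> nat \<Rightarrow> real \<Rightarrow> real" where
  "F_bound m n x = x powr (real m / 2)
     * ((real n + real m) / (real n + real m * x)) powr ((real m + real n) / 2)"

end

theory Submission imports Defs begin

text \<open>For every \<open>x > 0\<close> with \<open>(x - 1) (t - x) \<ge> 0\<close> the F-density satisfies
  \<open>f(t) \<le> B(x) \<cdot> f(t/x)/x\<close>, where \<open>B = F_bound m n\<close>. Since \<open>t \<mapsto> f(t/x)/x\<close> is again a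
  probability density, integrating over the tail \<open>[x,\<infinity>)\<close> (if \<open>x \<ge> 1\<close>) or \<open>(0,x]\<close> (if \<open>x \<le> 1\<close>)
  bounds its probability by \<open>B(x)\<close>. The monotonicity claims follow from the sign of the
  derivative of \<open>ln B(x)\<close>, which is that of \<open>1 - x\<close>.\<close>

lemma measure_le_of_density_le_rescaled:
  fixes X :: "'a \<Rightarrow> real" and f :: "real \<Rightarrow> real"
  assumes "prob_space M" and dist: "distributed M lborel X (\<lambda>t. ennreal (f t))"
    and "0 < x" "0 \<le> c" "A \<in> sets borel"
    and le: "\<And>t. t \<in> A \<Longrightarrow> f t \<le> c * (f (t / x) / x)"
  shows "measure M (X -` A \<inter> space M) \<le> c"
proof -
  interpret prob_space M by fact
  have [measurable]: "(\<lambda>t. ennreal (f t)) \<in> borel_measurable borel"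
    using distributed_borel_measurable[OF dist] by simp
  have total: "(\<integral>\<^sup>+t. ennreal (f t) \<partial>lborel) = 1"
    using distributed_emeasure[OF dist, of UNIV] by (simp add: emeasure_space_1)
  have rescaled: "(\<integral>\<^sup>+t. ennreal (1 / x) * ennreal (f (t / x)) \<partial>lborel) = 1"
    using nn_integral_real_affine[of "\<lambda>t. ennreal (f t)" "1 / x" 0] \<open>0 < x\<close> total
    by (simp add: nn_integral_cmult)
  have "emeasure M (X -` A \<inter> space M) = (\<integral>\<^sup>+t. ennreal (f t) * indicator A t \<partial>lborel)"
    using distributed_emeasure[OF dist] \<open>A \<in> sets borel\<close> by simp
  also have "\<dots> \<le> (\<integral>\<^sup>+t. ennreal c * (ennreal (1 / x) * ennreal (f (t / x))) \<partial>lborel)"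
  proof (intro nn_integral_mono)
    fix t
    have "0 \<le> 1 / x" using \<open>0 < x\<close> by simp
    then have "ennreal (c * (1 / x * f (t / x))) = ennreal c * (ennreal (1 / x) * ennreal (f (t / x)))"
      by (simp only: ennreal_mult'[OF \<open>0 \<le> c\<close>] ennreal_mult')
    moreover have "t \<in> A \<Longrightarrow> ennreal (f t) \<le> ennreal (c * (1 / x * f (t / x)))"
      using le[of t] by (intro ennreal_leI) simp
    ultimately show "ennreal (f t) * indicator A t \<le> ennreal c * (ennreal (1 / x) * ennreal (f (t / x)))"
      by (auto simp: indicator_def)
  qed
  also have "\<dots> = ennreal c"
    using rescaled by (simp add: nn_integral_cmult)
  finally show ?thesis
    by (simp add: emeasure_eq_measure \<open>0 \<le> c\<close>)
qed

lemma rescaled_denominator_le: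
  fixes a b x t :: real
  assumes "0 < a" "0 < b" "0 < x" "0 \<le> (x - 1) * (t - x)"
  shows "(1 + a / b * (t / x)) * (b + a * x) \<le> (b + a) * (1 + a / b * t)"
proof -
  have "(b + a) * (b + a * t) * x - (b * x + a * t) * (b + a * x) = a * b * ((x - 1) * (t - x))"
    by (simp add: algebra_simps)
  also have "\<dots> \<ge> 0" using assms by simp
  finally have "(b * x + a * t) * (b + a * x) / (b * x) \<le> (b + a) * (b + a * t) * x / (b * x)"
    using assms by (intro divide_right_mono) auto
  moreover have "(1 + a / b * (t / x)) * (b + a * x) = (b * x + a * t) * (b + a * x) / (b * x)"
    and "(b + a) * (1 + a / b * t) = (b + a) * (b + a * t) * x / (b * x)"
    using assms by (simp_all add: field_simps)
  ultimately show ?thesis by simp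
qed

definition F_kernel :: "nat \<Rightarrow> nat \<Rightarrow> real \<Rightarrow> real" where
  "F_kernel m n u = u powr ((real m - 2) / 2) / (1 + real m / real n * u) powr ((real n + real m) / 2)"

lemma F_kernel_le_rescaled:
  assumes "0 < m" "0 < n" "0 < x" "0 < t" "0 \<le> (x - 1) * (t - x)"
  shows "F_kernel m n t \<le> F_bound m n x * (F_kernel m n (t / x) / x)"
proof -
  define p where "p = (real n + real m) / 2"
  have pos: "0 < 1 + real m / real n * t" "0 < 1 + real m / real n * (t / x)"
    "0 < real n + real m * x" "0 < real n + real m"
    using assms by (auto intro: add_pos_nonneg)
  have ln_lhs: "ln (F_kernel m n t) = (real m / 2 - 1) * ln t - p * ln (1 + real m / real n * t)"
    using assms pos by (simp add: F_kernel_def ln_div ln_powr p_def diff_divide_distrib)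
  have ln_rhs: "ln (F_bound m n x * (F_kernel m n (t / x) / x))
      = real m / 2 * ln x + p * (ln (real n + real m) - ln (real n + real m * x))
        + (real m / 2 - 1) * (ln t - ln x) - p * ln (1 + real m / real n * (t / x)) - ln x"
    using assms pos by (simp add: F_bound_def F_kernel_def ln_mult ln_div ln_powr p_def
        diff_divide_distrib add.commute)
  have "ln (1 + real m / real n * (t / x)) + ln (real n + real m * x)
      \<le> ln (real n + real m) + ln (1 + real m / real n * t)"
  proof -
    have "ln ((1 + real m / real n * (t / x)) * (real n + real m * x))
        \<le> ln ((real n + real m) * (1 + real m / real n * t))"
      using rescaled_denominator_le[of "real m" "real n" x t] assms pos by simp
    then show ?thesis using pos by (simp add: ln_mult)
  qed
  then have "p * (ln (1 + real m / real n * (t / x)) + ln (real n + real m * x))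
      \<le> p * (ln (real n + real m) + ln (1 + real m / real n * t))"
    by (rule mult_left_mono) (simp add: p_def)
  then have "ln (F_kernel m n t) \<le> ln (F_bound m n x * (F_kernel m n (t / x) / x))"
    unfolding ln_lhs ln_rhs by (simp add: algebra_simps diff_divide_distrib)
  then show ?thesis
    using assms pos by (simp add: F_kernel_def F_bound_def)
qed

lemma F_bound_nonneg: "0 \<le> F_bound m n x"
  by (simp add: F_bound_def)

lemma F_density_le_rescaled:
  assumes "0 < m" "0 < n" "0 < x" "0 \<le> (x - 1) * (t - x)"
  shows "F_density m n t \<le> F_bound m n x * (F_density m n (t / x) / x)"
proof (cases "0 < t")
  case True
  define K where "K = Gamma ((real n + real m) / 2) * (real m / real n) powr (real m / 2)
    / (Gamma (real m / 2) * Gamma (real n / 2))"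
  have "0 \<le> K" using assms by (simp add: K_def Gamma_real_pos less_imp_le)
  have density: "\<And>u. 0 < u \<Longrightarrow> F_density m n u = K * F_kernel m n u"
    by (simp add: F_density_def K_def F_kernel_def)
  have "K * F_kernel m n t \<le> K * (F_bound m n x * (F_kernel m n (t / x) / x))"
    using F_kernel_le_rescaled[OF assms(1-3) True assms(4)] \<open>0 \<le> K\<close> by (rule mult_left_mono)
  then show ?thesis
    using density[of t] density[of "t / x"] True assms by (simp add: algebra_simps)
next
  case False
  then show ?thesis
    using assms by (simp add: F_density_def F_bound_nonneg)
qed

definition F_log_bound :: "nat \<Rightarrow> nat \<Rightarrow> real \<Rightarrow> real" where
  "F_log_bound m n x = real m / 2 * ln x
     + (real m + real n) / 2 * (ln (real n + real m) - ln (real n + real m * x))"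

lemma F_bound_eq_exp:
  assumes "0 < m" "0 < n" "0 < x"
  shows "F_bound m n x = exp (F_log_bound m n x)"
proof -
  have "0 < real n + real m * x" using assms by (simp add: add_pos_nonneg)
  then show ?thesis
    using assms by (simp add: F_bound_def F_log_bound_def powr_def exp_add ln_div)
qed

lemma F_log_bound_deriv:
  assumes "0 < m" "0 < n" "0 < x"
  shows "(F_log_bound m n has_real_derivative
            real m * real n * (1 - x) / (2 * x * (real n + real m * x))) (at x)"
proof -
  have "0 < real n + real m * x" using assms by (simp add: add_pos_nonneg)
  then show ?thesis
    unfolding F_log_bound_def[abs_def] using assms
    by (auto intro!: derivative_eq_intros simp: divide_simps) (simp add: algebra_simps)
qed

lemma continuous_on_F_log_bound:
  assumes "0 < m" "0 < n" "0 < a"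
  shows "continuous_on {a..b} (F_log_bound m n)"
proof -
  have "\<And>x. a \<le> x \<Longrightarrow> real n + real m * x \<noteq> 0"
    using assms by (smt (verit) mult_pos_pos of_nat_0_less_iff)
  then show ?thesis
    unfolding F_log_bound_def using assms by (auto intro!: continuous_intros)
qed

lemma F_bound_mono_on:
  assumes "0 < m" "0 < n"
  shows "mono_on {0<..<1} (F_bound m n)"
proof (rule mono_onI)
  fix r s :: real
  assume r: "r \<in> {0<..<1}" and s: "s \<in> {0<..<1}" and "r \<le> s"
  have "F_log_bound m n r \<le> F_log_bound m n s"
  proof (rule DERIV_nonneg_imp_increasing_open[OF \<open>r \<le> s\<close>])
    fix x assume "r < x" "x < s"
    then have "0 < x" "x < 1" using r s by auto
    moreover have "0 < real n + real m * x" using assms \<open>0 < x\<close> by (simp add: add_pos_nonneg)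
    ultimately show "\<exists>y. DERIV (F_log_bound m n) x :> y \<and> 0 \<le> y"
      using F_log_bound_deriv[OF assms \<open>0 < x\<close>] by auto
  qed (use continuous_on_F_log_bound assms r in auto)
  then show "F_bound m n r \<le> F_bound m n s"
    using F_bound_eq_exp[OF assms] r s by simp
qed

lemma F_bound_antimono_on:
  assumes "0 < m" "0 < n"
  shows "antimono_on {1<..} (F_bound m n)"
proof (rule monotone_onI)
  fix r s :: real
  assume r: "r \<in> {1<..}" and s: "s \<in> {1<..}" and "r \<le> s"
  have "F_log_bound m n s \<le> F_log_bound m n r"
  proof (rule DERIV_nonpos_imp_decreasing_open[OF \<open>r \<le> s\<close>])
    fix x assume "r < x" "x < s"
    then have "0 < x" "1 < x" using r s by auto
    moreover have "0 < real n + real m * x" using assms \<open>0 < x\<close> by (simp add: add_pos_nonneg)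
    ultimately show "\<exists>y. DERIV (F_log_bound m n) x :> y \<and> y \<le> 0"
      using F_log_bound_deriv[OF assms \<open>0 < x\<close>]
      by (auto intro!: divide_nonpos_pos mult_nonneg_nonpos)
  qed (use continuous_on_F_log_bound assms r in auto)
  then show "F_bound m n s \<le> F_bound m n r"
    using F_bound_eq_exp[OF assms] r s by simp
qed

theorem corollary10:
  fixes M :: "'a measure" and X :: "'a \<Rightarrow> real" and m n :: nat
  assumes "prob_space M"
    and "0 < m" and "0 < n"
    and "distributed M lborel X (\<lambda>x. ennreal (F_density m n x))"
  shows "(\<forall>x\<ge>1. measure M {\<omega> \<in> space M. X \<omega> \<ge> x} \<le> F_bound m n x)
    \<and> (\<forall>x. 0 < x \<and> x \<le> 1 \<longrightarrow> measure M {\<omega> \<in> space M. X \<omega> \<le> x} \<le> F_bound m n x)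
    \<and> mono_on {0<..<1} (F_bound m n)
    \<and> antimono_on {1<..} (F_bound m n)"
proof -
  have tail: "measure M (X -` A \<inter> space M) \<le> F_bound m n x"
    if "0 < x" "A \<in> sets borel" "\<And>t. t \<in> A \<Longrightarrow> 0 \<le> (x - 1) * (t - x)" for x A
    using measure_le_of_density_le_rescaled[OF assms(1,4) \<open>0 < x\<close> F_bound_nonneg \<open>A \<in> sets borel\<close>]
      F_density_le_rescaled[OF assms(2,3) \<open>0 < x\<close>] that(3) by blast
  have "measure M {\<omega> \<in> space M. X \<omega> \<ge> x} \<le> F_bound m n x" if "1 \<le> x" for x
    using tail[of x "{x..}"] that by (simp add: vimage_def Int_def conj_commute)
  moreover have "measure M {\<omega> \<in> space M. X \<omega> \<le> x} \<le> F_bound m n x" if "0 < x" "x \<le> 1" for x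
    using tail[of x "{..x}"] that by (simp add: vimage_def Int_def conj_commute mult_nonpos_nonpos)
  ultimately show ?thesis
    using F_bound_mono_on[OF assms(2,3)] F_bound_antimono_on[OF assms(2,3)] by blast
qed

end
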